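(* With respect to the lexicographical product, $I_{even}\times\omega\cong I_{odd}$, $I_{odd}\times\omega\cong I_{even}$, and $I\times\omega\cong I$. Consequently $I_{even}\times\omega^2\cong I_{even}$ and $I_{odd}\times\omega^2\cong I_{odd}$.
   Context: For linear orders $X,Y$, $X\times Y$ is the lexicographical product (each point of $X$ replaced by a copy of $Y$). Ordinal exponents have their usual ordinal meaning, with $\omega^\omega=\sup_{n<\omega}\omega^n$; $kZ$ denotes $k$ consecutive copies of the order $Z$. The $\omega^*$-sum $\cdots+M_2+M_1$ has $M_{k+1}$ entirely to the left of $M_k$. For $n\ge 0$ let $L_n=\cdots+3\omega^{n+3}+2\omega^{n+2}+\omega^{n+1}+\omega^\omega$ (the $\omega^*$-sum whose $k$-th summand from the right, $k\ge1$, is $k\,\omega^{n+k}$, followed by $\omega^\omega$), and for $n\ge1$ let $L_{-n}=\cdots+(n+3)\omega^{3}+(n+2)\omega^{2}+(n+1)\omega+\omega^\omega$ (the $\omega^*$-sum whose $k$-th summand from the right is $(n+k)\omega^k$, followed by $\omega^\omega$). For orders $M_i$ ($i\in\mathbb{Z}$), $\cdots+M_{-1}+M_0+M_1+\cdots$ denotes the $\mathbb{Z}$-indexed ordered sum. Define \[ I_{even}=\cdots+L_{-2}+L_0+L_2+\cdots,\quad I_{odd}=\cdots+L_{-1}+L_1+L_3+\cdots,\quad I=\cdots+L_{-1}+L_0+L_1+\cdots, \] the $\mathbb{Z}$-sums of the $L_i$ over even $i$, odd $i$, and all $i$ respectively, in increasing order of index. *)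

theory Defs
  imports Main
begin

section \<open>Linear orders as (reflexive) relations, carrier = Field\<close>

definition order_iso :: "'a rel \<Rightarrow> 'b rel \<Rightarrow> bool" where
  "order_iso r s \<longleftrightarrow> (\<exists>f. bij_betw f (Field r) (Field s) \<and>
      (\<forall>a\<in>Field r. \<forall>b\<in>Field r. (a, b) \<in> r \<longleftrightarrow> (f a, f b) \<in> s))"

definition osum :: "'i rel \<Rightarrow> ('i \<Rightarrow> 'a rel) \<Rightarrow> ('i \<times> 'a) rel" where
  "osum J M = {((i, x), (j, y)). i \<in> Field J \<and> j \<in> Field J \<and>
      x \<in> Field (M i) \<and> y \<in> Field (M j) \<and>
      ((i \<noteq> j \<and> (i, j) \<in> J) \<or> (i = j \<and> (x, y) \<in> M i))}"

definition lexprod :: "'a rel \<Rightarrow> 'b rel \<Rightarrow> ('a \<times> 'b) rel" where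
  "lexprod X Y = {((a, b), (a', b')). a \<in> Field X \<and> a' \<in> Field X \<and>
      b \<in> Field Y \<and> b' \<in> Field Y \<and>
      ((a \<noteq> a' \<and> (a, a') \<in> X) \<or> (a = a' \<and> (b, b') \<in> Y))}"

definition omega_ord :: "nat rel" where
  "omega_ord = {(m, n). m \<le> n}"

definition fin_ord :: "nat \<Rightarrow> nat rel" where
  "fin_ord k = {(a, b). a \<le> b \<and> b < k}"

text \<open>Ordinal power \<omega>^n, realised on nat lists of length n:
  \<omega>^0 = 1, \<omega>^(n+1) = \<omega>^n \<cdot> \<omega> (= \<omega> copies of \<omega>^n).\<close>
fun omega_pow :: "nat \<Rightarrow> nat list rel" where
  "omega_pow 0 = {([], [])}"
| "omega_pow (Suc n) =
     (\<lambda>((a, xs), (b, ys)). (a # xs, b # ys)) ` lexprod omega_ord (omega_pow n)"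

text \<open>\<omega>^\<omega> = sup of the chain \<omega>^0 \<subseteq> \<omega>^1 \<subseteq> ..., where \<omega>^n is identified with an
  initial segment of \<omega>^(n+1) via xs \<mapsto> 0 # xs.  Representatives: lists without
  leading zero.\<close>
definition omega_omega :: "nat list rel" where
  "omega_omega = {(xs, ys). (xs = [] \<or> hd xs \<noteq> 0) \<and> (ys = [] \<or> hd ys \<noteq> 0) \<and>
      (length xs < length ys \<or>
       (length xs = length ys \<and> (xs, ys) \<in> omega_pow (length xs)))}"

text \<open>Summands indexed by i \<le> 0: index -k (k \<ge> 1) is the k-th summand
  from the right, index 0 is the final \<omega>^\<omega> (as 1 copy of \<omega>^\<omega>).
  m = n \<ge> 0: k-th summand k \<omega>^(n+k);  m = -n < 0: k-th summand (n+k) \<omega>^k.\<close>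
definition L_summand :: "int \<Rightarrow> int \<Rightarrow> (nat \<times> nat list) rel" where
  "L_summand m i =
     (if i = 0 then lexprod (fin_ord 1) omega_omega
      else let k = nat (- i) in
        (if m \<ge> 0 then lexprod (fin_ord k) (omega_pow (nat m + k))
         else lexprod (fin_ord (nat (- m) + k)) (omega_pow k)))"

definition L_ord :: "int \<Rightarrow> (int \<times> (nat \<times> nat list)) rel" where
  "L_ord m = osum {(i, j). i \<le> j \<and> j \<le> (0::int)} (L_summand m)"

definition int_ord :: "int rel" where
  "int_ord = {(i, j). i \<le> j}"

definition I_even :: "(int \<times> (int \<times> (nat \<times> nat list))) rel" where
  "I_even = osum int_ord (\<lambda>i. L_ord (2 * i))"

definition I_odd :: "(int \<times> (int \<times> (nat \<times> nat list))) rel" where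
  "I_odd = osum int_ord (\<lambda>i. L_ord (2 * i + 1))"

definition I_all :: "(int \<times> (int \<times> (nat \<times> nat list))) rel" where
  "I_all = osum int_ord L_ord"

end

theory Submission
  imports Defs
begin

text \<open>Right multiplication by \<open>\<omega>\<close> distributes over ordered sums, so it acts summand by summand.
  For \<open>m \<ge> 0\<close> it turns the summand \<open>k \<omega>\<^bsup>m+k\<^esup>\<close> of \<open>L\<^sub>m\<close> into \<open>k \<omega>\<^bsup>m+1+k\<^esup>\<close>, and the last
  summand survives because \<open>\<omega>\<^sup>\<omega> \<cdot> \<omega> = \<omega>\<^sup>\<omega>\<close>.  For \<open>m = -n < 0\<close> the summand \<open>(n + k) \<omega>\<^sup>k\<close>
  becomes \<open>(n + k) \<omega>\<^bsup>k+1\<^esup>\<close>, the \<open>(k + 1)\<close>-th summand of \<open>L\<^sub>m\<^sub>+\<^sub>1\<close>, while the last summand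
  splits as \<open>\<omega>\<^sup>\<omega> = n \<omega> + \<omega>\<^sup>\<omega>\<close> and supplies the first summand \<open>n \<omega>\<close> of \<open>L\<^sub>m\<^sub>+\<^sub>1\<close>.  Thus
  \<open>L\<^sub>m \<times> \<omega> \<cong> L\<^sub>m\<^sub>+\<^sub>1\<close>, the \<open>\<int>\<close>-sums are handled by shifting the index, and \<open>\<omega>\<^sup>2\<close> is
  multiplication by \<open>\<omega>\<close> twice.\<close>

section \<open>Order isomorphisms, ordered sums and lexicographic products\<close>

lemma order_isoI:
  assumes "bij_betw f (Field r) (Field s)"
    and "\<And>a b. a \<in> Field r \<Longrightarrow> b \<in> Field r \<Longrightarrow> (a, b) \<in> r \<longleftrightarrow> (f a, f b) \<in> s"
  shows "order_iso r s"
  using assms unfolding order_iso_def by blast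

lemma order_iso_byWitness:
  assumes "\<forall>a\<in>Field r. g (f a) = a" "\<forall>b\<in>Field s. f (g b) = b"
    and "f ` Field r \<subseteq> Field s" "g ` Field s \<subseteq> Field r"
    and "\<And>a b. a \<in> Field r \<Longrightarrow> b \<in> Field r \<Longrightarrow> (a, b) \<in> r \<longleftrightarrow> (f a, f b) \<in> s"
  shows "order_iso r s"
  using assms by (intro order_isoI bij_betw_byWitness[of _ g]) auto

lemma order_iso_trans:
  assumes "order_iso r s" "order_iso s t"
  shows "order_iso r t"
proof -
  obtain f where f: "bij_betw f (Field r) (Field s)"
      "\<forall>a\<in>Field r. \<forall>b\<in>Field r. (a, b) \<in> r \<longleftrightarrow> (f a, f b) \<in> s"
    using assms(1) unfolding order_iso_def by blast
  obtain g where g: "bij_betw g (Field s) (Field t)"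
      "\<forall>a\<in>Field s. \<forall>b\<in>Field s. (a, b) \<in> s \<longleftrightarrow> (g a, g b) \<in> t"
    using assms(2) unfolding order_iso_def by blast
  show ?thesis
  proof (rule order_isoI[of "g \<circ> f"])
    show "bij_betw (g \<circ> f) (Field r) (Field t)"
      using f g bij_betw_trans by blast
    fix a b assume "a \<in> Field r" "b \<in> Field r"
    moreover from this have "f a \<in> Field s" "f b \<in> Field s"
      using f bij_betw_apply by metis+
    ultimately show "(a, b) \<in> r \<longleftrightarrow> ((g \<circ> f) a, (g \<circ> f) b) \<in> t"
      using f g by simp
  qed
qed

lemma order_iso_sym:
  assumes "order_iso r s"
  shows "order_iso s r"
proof -
  obtain f where f: "bij_betw f (Field r) (Field s)"
      "\<forall>a\<in>Field r. \<forall>b\<in>Field r. (a, b) \<in> r \<longleftrightarrow> (f a, f b) \<in> s"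
    using assms unfolding order_iso_def by blast
  let ?g = "the_inv_into (Field r) f"
  show ?thesis
  proof (rule order_isoI[of ?g])
    show "bij_betw ?g (Field s) (Field r)"
      using f bij_betw_the_inv_into by blast
    fix a b assume "a \<in> Field s" "b \<in> Field s"
    then have "?g a \<in> Field r" "?g b \<in> Field r" "f (?g a) = a" "f (?g b) = b"
      using f(1) by (auto intro: the_inv_into_into simp: bij_betw_def f_the_inv_into_f)
    then show "(a, b) \<in> s \<longleftrightarrow> (?g a, ?g b) \<in> r"
      using f(2) by metis
  qed
qed

lemma mem_lexprod [simp]:
  "((a, b), (a', b')) \<in> lexprod X Y \<longleftrightarrow>
     a \<in> Field X \<and> a' \<in> Field X \<and> b \<in> Field Y \<and> b' \<in> Field Y \<and>
     ((a \<noteq> a' \<and> (a, a') \<in> X) \<or> (a = a' \<and> (b, b') \<in> Y))"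
  by (simp add: lexprod_def)

lemma mem_osum [simp]:
  "((i, x), (j, y)) \<in> osum J M \<longleftrightarrow>
     i \<in> Field J \<and> j \<in> Field J \<and> x \<in> Field (M i) \<and> y \<in> Field (M j) \<and>
     ((i \<noteq> j \<and> (i, j) \<in> J) \<or> (i = j \<and> (x, y) \<in> M i))"
  by (simp add: osum_def)

text \<open>No reflexivity is needed: \<open>b \<in> Field Y\<close> is related to some \<open>b'\<close>, and the copy of that
  relation in the fibre over \<open>a\<close> puts \<open>(a, b)\<close> into the field.\<close>

lemma Field_lexprod [simp]: "Field (lexprod X Y) = Field X \<times> Field Y"
proof (intro equalityI subsetI)
  fix p assume "p \<in> Field (lexprod X Y)"
  then show "p \<in> Field X \<times> Field Y" by (auto simp: Field_def lexprod_def)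
next
  fix p assume "p \<in> Field X \<times> Field Y"
  then obtain a b where p: "p = (a, b)" "a \<in> Field X" "b \<in> Field Y" by blast
  then obtain b' where "(b, b') \<in> Y \<or> (b', b) \<in> Y" by (auto simp: Field_def)
  with p show "p \<in> Field (lexprod X Y)"
    by (metis FieldI1 FieldI2 mem_lexprod)
qed

lemma Field_osum [simp]: "Field (osum J M) = (SIGMA i:Field J. Field (M i))"
proof (intro equalityI subsetI)
  fix p assume "p \<in> Field (osum J M)"
  then show "p \<in> (SIGMA i:Field J. Field (M i))" by (auto simp: Field_def osum_def)
next
  fix p assume "p \<in> (SIGMA i:Field J. Field (M i))"
  then obtain i x where p: "p = (i, x)" "i \<in> Field J" "x \<in> Field (M i)" by blast
  then obtain x' where "(x, x') \<in> M i \<or> (x', x) \<in> M i" by (auto simp: Field_def)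
  with p show "p \<in> Field (osum J M)"
    by (metis FieldI1 FieldI2 mem_osum)
qed

lemma lexprod_cong_left:
  assumes "order_iso X X'"
  shows "order_iso (lexprod X Y) (lexprod X' Y)"
proof -
  obtain f where f: "bij_betw f (Field X) (Field X')"
      "\<forall>a\<in>Field X. \<forall>b\<in>Field X. (a, b) \<in> X \<longleftrightarrow> (f a, f b) \<in> X'"
    using assms unfolding order_iso_def by blast
  show ?thesis
  proof (rule order_isoI[of "map_prod f id"])
    show "bij_betw (map_prod f id) (Field (lexprod X Y)) (Field (lexprod X' Y))"
      using f(1) by (simp add: bij_betw_map_prod)
    fix p q assume "p \<in> Field (lexprod X Y)" "q \<in> Field (lexprod X Y)"
    then show "(p, q) \<in> lexprod X Y \<longleftrightarrow> (map_prod f id p, map_prod f id q) \<in> lexprod X' Y"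
      using f unfolding bij_betw_def inj_on_def by (cases p; cases q) auto
  qed
qed

lemma lexprod_cong_right:
  assumes "order_iso Y Y'"
  shows "order_iso (lexprod X Y) (lexprod X Y')"
proof -
  obtain f where f: "bij_betw f (Field Y) (Field Y')"
      "\<forall>a\<in>Field Y. \<forall>b\<in>Field Y. (a, b) \<in> Y \<longleftrightarrow> (f a, f b) \<in> Y'"
    using assms unfolding order_iso_def by blast
  show ?thesis
  proof (rule order_isoI[of "map_prod id f"])
    show "bij_betw (map_prod id f) (Field (lexprod X Y)) (Field (lexprod X Y'))"
      using f(1) by (simp add: bij_betw_map_prod)
    fix p q assume "p \<in> Field (lexprod X Y)" "q \<in> Field (lexprod X Y)"
    then show "(p, q) \<in> lexprod X Y \<longleftrightarrow> (map_prod id f p, map_prod id f q) \<in> lexprod X Y'"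
      using f unfolding bij_betw_def by (cases p; cases q) auto
  qed
qed

lemma lexprod_assoc: "order_iso (lexprod (lexprod X Y) Z) (lexprod X (lexprod Y Z))"
  by (rule order_iso_byWitness[where f = "\<lambda>((a, b), c). (a, (b, c))" and g = "\<lambda>(a, (b, c)). ((a, b), c)"])
     auto

lemma lexprod_osum_distrib: "order_iso (lexprod (osum J M) Y) (osum J (\<lambda>i. lexprod (M i) Y))"
  by (rule order_iso_byWitness[where f = "\<lambda>((i, x), y). (i, (x, y))" and g = "\<lambda>(i, (x, y)). ((i, x), y)"])
     auto

lemma osum_cong:
  assumes g: "bij_betw g (Field J) (Field J')"
    and g_mono: "\<forall>i\<in>Field J. \<forall>j\<in>Field J. (i, j) \<in> J \<longleftrightarrow> (g i, g j) \<in> J'"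
    and iso: "\<forall>i\<in>Field J. order_iso (M i) (M' (g i))"
  shows "order_iso (osum J M) (osum J' M')"
proof -
  obtain F where F: "\<And>i. i \<in> Field J \<Longrightarrow> bij_betw (F i) (Field (M i)) (Field (M' (g i)))"
      "\<And>i. i \<in> Field J \<Longrightarrow> \<forall>a\<in>Field (M i). \<forall>b\<in>Field (M i). (a, b) \<in> M i \<longleftrightarrow> (F i a, F i b) \<in> M' (g i)"
    using iso unfolding order_iso_def by metis
  have g_inj: "inj_on g (Field J)" using g by (simp add: bij_betw_def)
  let ?h = "\<lambda>(i, x). (g i, F i x)"
  show ?thesis
  proof (rule order_isoI[of ?h])
    show "bij_betw ?h (Field (osum J M)) (Field (osum J' M'))"
      unfolding Field_osum bij_betw_def
    proof
      show "inj_on ?h (SIGMA i:Field J. Field (M i))"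
        using g_inj F(1) by (auto simp: inj_on_def bij_betw_def)
      show "?h ` (SIGMA i:Field J. Field (M i)) = (SIGMA j:Field J'. Field (M' j))"
      proof safe
        fix i x assume "i \<in> Field J" "x \<in> Field (M i)"
        then show "g i \<in> Field J'" "F i x \<in> Field (M' (g i))"
          using g F(1) bij_betw_apply by metis+
      next
        fix j y assume j: "j \<in> Field J'" "y \<in> Field (M' j)"
        then obtain i where i: "i \<in> Field J" "j = g i"
          using g by (metis bij_betw_iff_bijections)
        then obtain x where "x \<in> Field (M i)" "y = F i x"
          using F(1)[OF i(1)] j unfolding bij_betw_def by blast
        with i show "(j, y) \<in> ?h ` (SIGMA i:Field J. Field (M i))" by force
      qed
    qed
    fix p q assume "p \<in> Field (osum J M)" "q \<in> Field (osum J M)"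
    then obtain i x j y where pq: "p = (i, x)" "q = (j, y)" "i \<in> Field J" "x \<in> Field (M i)"
        "j \<in> Field J" "y \<in> Field (M j)"
      by auto
    have "g i \<in> Field J'" "g j \<in> Field J'" "F i x \<in> Field (M' (g i))" "F j y \<in> Field (M' (g j))"
      using pq g F(1) bij_betw_apply by metis+
    moreover have "g i = g j \<longleftrightarrow> i = j" using g_inj pq by (auto simp: inj_on_def)
    ultimately show "(p, q) \<in> osum J M \<longleftrightarrow> (?h p, ?h q) \<in> osum J' M'"
      using pq g_mono F(2)[OF pq(3)] by auto
  qed
qed

lemma osum_cong_summands:
  "\<forall>i\<in>Field J. order_iso (M i) (M' i) \<Longrightarrow> order_iso (osum J M) (osum J M')"
  by (rule osum_cong[where g = id]) auto

lemma mem_tagged [simp]: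
  "((c', x), (c'', y)) \<in> map_prod (Pair c) (Pair c) ` r \<longleftrightarrow> c' = c \<and> c'' = c \<and> (x, y) \<in> r"
  by force

lemma Field_tagged [simp]: "Field (map_prod (Pair c) (Pair c) ` r) = Pair c ` Field r"
  by (force simp: Field_def)

lemma order_iso_tagged: "order_iso r (map_prod (Pair c) (Pair c) ` r)"
  by (rule order_isoI[of "Pair c"]) (auto simp: bij_betw_def inj_on_def)

definition nonpos_ord :: "int rel" where
  "nonpos_ord = {(i, j). i \<le> j \<and> j \<le> 0}"

definition bool_ord :: "bool rel" where
  "bool_ord = {(a, b). a \<le> b}"

lemma mem_nonpos_ord [simp]: "(i, j) \<in> nonpos_ord \<longleftrightarrow> i \<le> j \<and> j \<le> 0"
  by (simp add: nonpos_ord_def)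

lemma Field_nonpos_ord [simp]: "Field nonpos_ord = {i. i \<le> 0}"
  by (auto simp: Field_def nonpos_ord_def)

lemma mem_bool_ord [simp]: "(a, b) \<in> bool_ord \<longleftrightarrow> a \<le> b"
  by (simp add: bool_ord_def)

lemma Field_bool_ord [simp]: "Field bool_ord = UNIV"
  by (auto simp: Field_def bool_ord_def)

text \<open>Splitting the last summand into two consecutive pieces shifts all earlier summands one
  step to the left.  The earlier summands are tagged with \<open>True\<close> only so that all summands
  have the same type.\<close>

lemma osum_nonpos_merge_last:
  "order_iso
    (osum nonpos_ord (\<lambda>i. if i = 0 then osum bool_ord (\<lambda>b. T (if b then 0 else -1))
                          else map_prod (Pair True) (Pair True) ` T (i - 1)))
    (osum nonpos_ord T)"
  by (rule order_iso_byWitness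
        [where f = "\<lambda>(i, b, x). (if i < 0 then i - 1 else if b then 0 else -1, x)"
           and g = "\<lambda>(j, y). if j = 0 \<or> j = -1 then (0, j = 0, y) else (j + 1, True, y)"])
     (auto split: if_splits)

section \<open>Powers of \<open>\<omega>\<close>\<close>

fun lex_le :: "nat list \<Rightarrow> nat list \<Rightarrow> bool" where
  "lex_le [] [] = True"
| "lex_le (a # xs) (b # ys) = (a < b \<or> (a = b \<and> lex_le xs ys))"
| "lex_le _ _ = False"

lemma lex_le_refl [simp]: "lex_le xs xs"
  by (induction xs) auto

lemma lex_le_snoc:
  "length xs = length ys \<Longrightarrow>
   lex_le (xs @ [a]) (ys @ [b]) \<longleftrightarrow> (lex_le xs ys \<and> xs \<noteq> ys) \<or> (xs = ys \<and> a \<le> b)"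
  by (induction xs ys rule: list_induct2) auto

lemma mem_omega_ord [simp]: "(a, b) \<in> omega_ord \<longleftrightarrow> a \<le> b"
  by (simp add: omega_ord_def)

lemma Field_omega_ord [simp]: "Field omega_ord = UNIV"
  by (auto simp: Field_def omega_ord_def)

lemma mem_fin_ord [simp]: "(a, b) \<in> fin_ord k \<longleftrightarrow> a \<le> b \<and> b < k"
  by (simp add: fin_ord_def)

lemma Field_fin_ord [simp]: "Field (fin_ord k) = {..<k}"
  by (force simp: Field_def fin_ord_def)

lemma omega_pow_eq: "omega_pow n = {(xs, ys). length xs = n \<and> length ys = n \<and> lex_le xs ys}"
proof (induction n)
  case 0
  show ?case by auto
next
  case (Suc n)
  have Field_n: "Field (omega_pow n) = {xs. length xs = n}"
    unfolding Suc Field_def by auto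
  show ?case
  proof (intro set_eqI iffI)
    fix p assume "p \<in> omega_pow (Suc n)"
    with Suc Field_n show "p \<in> {(xs, ys). length xs = Suc n \<and> length ys = Suc n \<and> lex_le xs ys}"
      by auto
  next
    fix p assume "p \<in> {(xs, ys). length xs = Suc n \<and> length ys = Suc n \<and> lex_le xs ys}"
    then obtain a xs b ys where "p = (a # xs, b # ys)" "length xs = n" "length ys = n"
        "lex_le (a # xs) (b # ys)"
      by (auto simp: length_Suc_conv)
    with Suc Field_n show "p \<in> omega_pow (Suc n)"
      by (auto intro!: image_eqI[where x = "((a, xs), (b, ys))"])
  qed
qed

lemma mem_omega_pow [simp]: "(xs, ys) \<in> omega_pow n \<longleftrightarrow> length xs = n \<and> length ys = n \<and> lex_le xs ys"
  by (simp add: omega_pow_eq)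

lemma Field_omega_pow [simp]: "Field (omega_pow n) = {xs. length xs = n}"
  by (force simp: Field_def omega_pow_eq)

declare omega_pow.simps(2) [simp del]

lemma lexprod_omega_pow_omega: "order_iso (lexprod (omega_pow p) omega_ord) (omega_pow (Suc p))"
proof (rule order_iso_byWitness[where f = "\<lambda>(xs, c). xs @ [c]" and g = "\<lambda>ys. (butlast ys, last ys)"])
  show "\<forall>ys\<in>Field (omega_pow (Suc p)). (\<lambda>(xs, c). xs @ [c]) (butlast ys, last ys) = ys"
    by (auto intro: append_butlast_last_id)
qed (auto simp: lex_le_snoc)

lemma omega_ord_iso_omega_pow_1: "order_iso omega_ord (omega_pow 1)"
  by (rule order_iso_byWitness[where f = "\<lambda>n. [n]" and g = hd]) (auto simp: length_Suc_conv)

lemma lexprod_fin_ord_1: "order_iso (lexprod (fin_ord 1) X) X"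
  by (rule order_iso_byWitness[where f = snd and g = "Pair 0"]) auto

definition no_leading_zero :: "nat list \<Rightarrow> bool" where
  "no_leading_zero xs \<longleftrightarrow> xs = [] \<or> hd xs \<noteq> 0"

lemma mem_omega_omega [simp]:
  "(xs, ys) \<in> omega_omega \<longleftrightarrow> no_leading_zero xs \<and> no_leading_zero ys \<and>
     (length xs < length ys \<or> (length xs = length ys \<and> lex_le xs ys))"
  by (auto simp: omega_omega_def no_leading_zero_def)

lemma Field_omega_omega [simp]: "Field omega_omega = {xs. no_leading_zero xs}"
  by (force simp: Field_def)

text \<open>Appending a last digit maps the lists of length \<open>n \<ge> 1\<close> onto those of length \<open>n + 1\<close>;
  the pairs \<open>([], c)\<close> fill the lists of length at most one.\<close>

lemma omega_omega_times_omega: "order_iso (lexprod omega_omega omega_ord) omega_omega"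
proof (rule order_iso_byWitness
    [where f = "\<lambda>(xs, c). if xs = [] then (if c = 0 then [] else [c]) else xs @ [c]"
       and g = "\<lambda>zs. if length zs \<le> 1 then ([], if zs = [] then 0 else hd zs) else (butlast zs, last zs)"])
  show "\<forall>zs\<in>Field omega_omega.
      (\<lambda>(xs, c). if xs = [] then (if c = 0 then [] else [c]) else xs @ [c])
        (if length zs \<le> 1 then ([], if zs = [] then 0 else hd zs) else (butlast zs, last zs)) = zs"
  proof
    fix zs assume "zs \<in> Field omega_omega"
    then show "(\<lambda>(xs, c). if xs = [] then (if c = 0 then [] else [c]) else xs @ [c])
        (if length zs \<le> 1 then ([], if zs = [] then 0 else hd zs) else (butlast zs, last zs)) = zs"
      by (cases zs rule: rev_cases) (auto simp: no_leading_zero_def le_Suc_eq length_0_conv)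
  qed
  show "(\<lambda>zs. if length zs \<le> 1 then ([], if zs = [] then 0 else hd zs) else (butlast zs, last zs))
      ` Field omega_omega \<subseteq> Field (lexprod omega_omega omega_ord)"
  proof (intro image_subsetI)
    fix zs assume "zs \<in> Field omega_omega"
    then show "(if length zs \<le> 1 then ([], if zs = [] then 0 else hd zs) else (butlast zs, last zs))
        \<in> Field (lexprod omega_omega omega_ord)"
      by (cases zs) (auto simp: no_leading_zero_def)
  qed
qed (auto simp: no_leading_zero_def lex_le_snoc split: if_splits)

text \<open>\<open>\<omega>\<^sup>\<omega> = n \<cdot> \<omega> + \<omega>\<^sup>\<omega>\<close> for \<open>n \<ge> 1\<close>: the lists below \<open>[n, 0]\<close> form the initial \<open>n \<cdot> \<omega>\<close>,
  and the remaining ones are renumbered by subtracting \<open>n\<close> from the leading digit of the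
  lists of length two.\<close>

fun split_omega_omega :: "nat \<Rightarrow> nat list \<Rightarrow> bool \<times> nat \<times> nat list" where
  "split_omega_omega n [] = (False, 0, [0])"
| "split_omega_omega n [b] = (False, 0, [b])"
| "split_omega_omega n [a, b] =
     (if a < n then (False, a, [b])
      else if a = n then (True, 0, if b = 0 then [] else [b])
      else (True, 0, [a - n, b]))"
| "split_omega_omega n zs = (True, 0, zs)"

fun unsplit_omega_omega :: "nat \<Rightarrow> bool \<times> nat \<times> nat list \<Rightarrow> nat list" where
  "unsplit_omega_omega n (False, a, zs) =
     (if a = 0 then (if hd zs = 0 then [] else [hd zs]) else [a, hd zs])"
| "unsplit_omega_omega n (True, a, zs) =
     (case zs of [] \<Rightarrow> [n, 0] | [b] \<Rightarrow> [n, b] | [a, b] \<Rightarrow> [a + n, b] | _ \<Rightarrow> zs)"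

lemma Field_omega_omega_split:
  "Field (osum bool_ord (\<lambda>b. if b then lexprod (fin_ord 1) omega_omega else lexprod (fin_ord n) (omega_pow 1)))
   = (SIGMA b:UNIV. if b then {0} \<times> {zs. no_leading_zero zs} else {..<n} \<times> {zs. length zs = 1})"
  by (simp add: if_distrib[of Field] lessThan_Suc cong: if_cong)

lemma omega_omega_split:
  assumes "n \<ge> 1"
  shows "order_iso omega_omega
    (osum bool_ord (\<lambda>b. if b then lexprod (fin_ord 1) omega_omega else lexprod (fin_ord n) (omega_pow 1)))"
proof (rule order_iso_byWitness[where f = "split_omega_omega n" and g = "unsplit_omega_omega n"],
    unfold Field_omega_omega_split Field_omega_omega)
  show "\<forall>zs\<in>{zs. no_leading_zero zs}. unsplit_omega_omega n (split_omega_omega n zs) = zs"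
  proof
    fix zs assume "zs \<in> {zs. no_leading_zero zs}"
    then show "unsplit_omega_omega n (split_omega_omega n zs) = zs"
      by (cases "(n, zs)" rule: split_omega_omega.cases) (auto simp: no_leading_zero_def)
  qed
  show "split_omega_omega n ` {zs. no_leading_zero zs}
      \<subseteq> (SIGMA b:UNIV. if b then {0} \<times> {zs. no_leading_zero zs} else {..<n} \<times> {zs. length zs = 1})"
  proof (intro image_subsetI)
    fix zs assume "zs \<in> {zs. no_leading_zero zs}"
    with assms show "split_omega_omega n zs
        \<in> (SIGMA b:UNIV. if b then {0} \<times> {zs. no_leading_zero zs} else {..<n} \<times> {zs. length zs = 1})"
      by (cases "(n, zs)" rule: split_omega_omega.cases) (auto simp: no_leading_zero_def)
  qed
  have "split_omega_omega n (unsplit_omega_omega n w) = w \<and> no_leading_zero (unsplit_omega_omega n w)"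
    if "w \<in> (SIGMA b:UNIV. if b then {0} \<times> {zs. no_leading_zero zs} else {..<n} \<times> {zs. length zs = 1})" for w
  proof -
    obtain b a zs where "w = (b, a, zs)" by (cases w)
    with that assms show ?thesis
      by (cases b; cases "(n, zs)" rule: split_omega_omega.cases)
         (auto simp: no_leading_zero_def length_Suc_conv)
  qed
  then show "\<forall>w\<in>SIGMA b:UNIV. if b then {0} \<times> {zs. no_leading_zero zs} else {..<n} \<times> {zs. length zs = 1}.
        split_omega_omega n (unsplit_omega_omega n w) = w"
    and "unsplit_omega_omega n ` (SIGMA b:UNIV. if b then {0} \<times> {zs. no_leading_zero zs} else {..<n} \<times> {zs. length zs = 1})
        \<subseteq> {zs. no_leading_zero zs}"
    by blast+
next
  fix u v assume "u \<in> {zs. no_leading_zero zs}" "v \<in> {zs. no_leading_zero zs}"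
  with assms show "(u, v) \<in> omega_omega \<longleftrightarrow> (split_omega_omega n u, split_omega_omega n v)
      \<in> osum bool_ord (\<lambda>b. if b then lexprod (fin_ord 1) omega_omega else lexprod (fin_ord n) (omega_pow 1))"
    by (cases "(n, u)" rule: split_omega_omega.cases; cases "(n, v)" rule: split_omega_omega.cases)
       (auto simp: no_leading_zero_def)
qed

section \<open>The orders \<open>L\<^sub>m\<close> and their \<open>\<int>\<close>-sums\<close>

lemma lexprod_omega_pow_Suc:
  "order_iso (lexprod (lexprod X (omega_pow p)) omega_ord) (lexprod X (omega_pow (Suc p)))"
  by (rule order_iso_trans[OF lexprod_assoc lexprod_cong_right[OF lexprod_omega_pow_omega]])

lemma lexprod_omega_ord_omega_ord:
  "order_iso (lexprod (lexprod X omega_ord) omega_ord) (lexprod X (omega_pow 2))"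
  using order_iso_trans[OF lexprod_cong_left[OF lexprod_cong_right[OF omega_ord_iso_omega_pow_1]]
      lexprod_omega_pow_Suc[of X 1]]
  by (simp add: numeral_2_eq_2)

lemma fin_ord_1_omega_omega_times_omega:
  "order_iso (lexprod (lexprod (fin_ord 1) omega_omega) omega_ord) omega_omega"
  by (rule order_iso_trans[OF lexprod_assoc
        order_iso_trans[OF lexprod_fin_ord_1 omega_omega_times_omega]])

lemma L_ord_eq: "L_ord m = osum nonpos_ord (L_summand m)"
  by (simp add: L_ord_def nonpos_ord_def)

lemma L_summand_0: "L_summand m 0 = lexprod (fin_ord 1) omega_omega"
  by (simp add: L_summand_def)

lemma L_summand_nonneg:
  "m \<ge> 0 \<Longrightarrow> i < 0 \<Longrightarrow> L_summand m i = lexprod (fin_ord (nat (-i))) (omega_pow (nat m + nat (-i)))"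
  by (simp add: L_summand_def Let_def)

lemma L_summand_neg:
  "m < 0 \<Longrightarrow> i < 0 \<Longrightarrow> L_summand m i = lexprod (fin_ord (nat (-m) + nat (-i))) (omega_pow (nat (-i)))"
  by (simp add: L_summand_def Let_def)

text \<open>This also covers \<open>m = -1\<close>, where \<open>L\<^sub>0\<close> comes from the other branch of \<open>L_summand\<close>.\<close>

lemma L_summand_succ_pred:
  assumes "m < 0" "i \<le> 0"
  shows "L_summand (m + 1) (i - 1) = lexprod (fin_ord (nat (-m) + nat (-i))) (omega_pow (Suc (nat (-i))))"
proof -
  obtain k where m: "m = - int (Suc k)" using negD[OF assms(1)] by blast
  obtain j where i: "i = - int j" using assms(2) by (rule nonpos_int_cases)
  show ?thesis unfolding m i by (cases k) (simp_all add: L_summand_def Let_def nat_add_distrib)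
qed

lemma L_times_omega_nonneg:
  assumes "m \<ge> 0"
  shows "order_iso (osum nonpos_ord (\<lambda>i. lexprod (L_summand m i) omega_ord)) (L_ord (m + 1))"
  unfolding L_ord_eq
proof (rule osum_cong_summands, intro ballI)
  fix i assume "i \<in> Field nonpos_ord"
  then consider "i = 0" | "i < 0" by fastforce
  then show "order_iso (lexprod (L_summand m i) omega_ord) (L_summand (m + 1) i)"
  proof cases
    case 1
    show ?thesis
      unfolding 1 L_summand_0
      by (rule order_iso_trans[OF fin_ord_1_omega_omega_times_omega order_iso_sym[OF lexprod_fin_ord_1]])
  next
    case 2
    with assms have "nat (m + 1) + nat (-i) = Suc (nat m + nat (-i))" by simp
    with assms 2 show ?thesis by (simp add: L_summand_nonneg lexprod_omega_pow_Suc)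
  qed
qed

lemma L_times_omega_neg:
  assumes "m < 0"
  shows "order_iso (osum nonpos_ord (\<lambda>i. lexprod (L_summand m i) omega_ord)) (L_ord (m + 1))"
  unfolding L_ord_eq
proof (rule order_iso_trans[OF osum_cong_summands osum_nonpos_merge_last], intro ballI)
  fix i assume "i \<in> Field nonpos_ord"
  then consider "i = 0" | "i < 0" by fastforce
  then show "order_iso (lexprod (L_summand m i) omega_ord)
      (if i = 0 then osum bool_ord (\<lambda>b. L_summand (m + 1) (if b then 0 else -1))
       else map_prod (Pair True) (Pair True) ` L_summand (m + 1) (i - 1))"
  proof cases
    case 1
    have "order_iso (lexprod (L_summand m 0) omega_ord)
        (osum bool_ord (\<lambda>b. if b then lexprod (fin_ord 1) omega_omega else lexprod (fin_ord (nat (-m))) (omega_pow 1)))"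
      unfolding L_summand_0 using assms
      by (intro order_iso_trans[OF fin_ord_1_omega_omega_times_omega omega_omega_split]) simp
    moreover have "osum bool_ord (\<lambda>b. L_summand (m + 1) (if b then 0 else -1)) =
        osum bool_ord (\<lambda>b. if b then lexprod (fin_ord 1) omega_omega else lexprod (fin_ord (nat (-m))) (omega_pow 1))"
      using L_summand_succ_pred[OF assms, of 0] by (simp add: L_summand_0 if_distrib cong: if_cong)
    ultimately show ?thesis
      using 1 by simp
  next
    case 2
    with assms show ?thesis
      by (simp add: L_summand_neg L_summand_succ_pred
          order_iso_trans[OF lexprod_omega_pow_Suc order_iso_tagged])
  qed
qed

lemma L_times_omega: "order_iso (lexprod (L_ord m) omega_ord) (L_ord (m + 1))"
proof -
  have "order_iso (lexprod (L_ord m) omega_ord) (osum nonpos_ord (\<lambda>i. lexprod (L_summand m i) omega_ord))"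
    unfolding L_ord_eq by (rule lexprod_osum_distrib)
  moreover have "order_iso (osum nonpos_ord (\<lambda>i. lexprod (L_summand m i) omega_ord)) (L_ord (m + 1))"
    using L_times_omega_nonneg L_times_omega_neg by (cases "m \<ge> 0") simp_all
  ultimately show ?thesis by (rule order_iso_trans)
qed

lemma mem_int_ord [simp]: "(i, j) \<in> int_ord \<longleftrightarrow> i \<le> j"
  by (simp add: int_ord_def)

lemma Field_int_ord [simp]: "Field int_ord = UNIV"
  by (auto simp: Field_def int_ord_def)

lemma osum_int_times_omega:
  fixes c :: int
  assumes "\<And>i. order_iso (lexprod (M i) omega_ord) (M' (i + c))"
  shows "order_iso (lexprod (osum int_ord M) omega_ord) (osum int_ord M')"
proof (rule order_iso_trans[OF lexprod_osum_distrib osum_cong[where g = "\<lambda>i. i + c"]])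
  show "bij_betw (\<lambda>i. i + c) (Field int_ord) (Field int_ord)"
    by (simp add: bij_betw_def inj_on_def image_iff)
qed (simp_all add: assms)

lemma I_even_times_omega: "order_iso (lexprod I_even omega_ord) I_odd"
  unfolding I_even_def I_odd_def
  by (rule osum_int_times_omega[where c = 0]) (simp add: L_times_omega)

lemma I_odd_times_omega: "order_iso (lexprod I_odd omega_ord) I_even"
  unfolding I_even_def I_odd_def
proof (rule osum_int_times_omega[where c = 1])
  fix i :: int
  show "order_iso (lexprod (L_ord (2 * i + 1)) omega_ord) (L_ord (2 * (i + 1)))"
    using L_times_omega[of "2 * i + 1"] by (simp add: algebra_simps)
qed

lemma I_all_times_omega: "order_iso (lexprod I_all omega_ord) I_all"
  unfolding I_all_def
  by (rule osum_int_times_omega[where c = 1]) (rule L_times_omega)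

lemma order_iso_lexprod_omega_pow_2:
  assumes "order_iso (lexprod X omega_ord) Y" "order_iso (lexprod Y omega_ord) Z"
  shows "order_iso (lexprod X (omega_pow 2)) Z"
  using order_iso_sym[OF lexprod_omega_ord_omega_ord] lexprod_cong_left[OF assms(1)] assms(2)
  by (blast intro: order_iso_trans)

theorem mainTheorem6:
  shows "order_iso (lexprod I_even omega_ord) I_odd
       \<and> order_iso (lexprod I_odd omega_ord) I_even
       \<and> order_iso (lexprod I_all omega_ord) I_all
       \<and> order_iso (lexprod I_even (omega_pow 2)) I_even
       \<and> order_iso (lexprod I_odd (omega_pow 2)) I_odd"
  using I_even_times_omega I_odd_times_omega I_all_times_omega
  by (blast intro: order_iso_lexprod_omega_pow_2)

end
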